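(* Let $\ell:\mathbb{R}\to\mathbb{R}$ be non-decreasing, convex, non-negative and continuously differentiable on $\mathbb{R}$, with $\ell'(z)>0$ for all $z\ge-\ell(0)/2$. Let $d=\sup\{z\in\mathbb{R}:\ell'(z)=0\}$, and $d=-\infty$ if $\ell'(z)>0$ for all $z$. Assume: (1) $d<-\ell(0)/2$; (2) $\ell$ is twice continuously differentiable on $(d,\infty)$; (3) $\ell''(z)>0$ on $(d,\infty)$; (4) $1/\ell'(z)$ is convex on $(d,\infty)$. Define $\psi(\theta,\rho)=\ell(\rho)-\inf_{z\in\mathbb{R}}\{\frac{1+\theta}{2}\ell(\rho-z)+\frac{1-\theta}{2}\ell(\rho+z)\}$ for $0\le\theta\le1$, $\rho\in\mathbb{R}$. Then for every $\theta\in[0,1]$, $\rho\mapsto\psi(\theta,\rho)$ is non-decreasing on $[-\ell(0)/2,\infty)$. *)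

theory Defs
  imports "HOL-Analysis.Analysis" "HOL-Library.Extended_Real"
begin

definition psi :: "(real \<Rightarrow> real) \<Rightarrow> real \<Rightarrow> real \<Rightarrow> real" where
  "psi l \<theta> \<rho> = l \<rho> - (INF z. (1 + \<theta>) / 2 * l (\<rho> - z) + (1 - \<theta>) / 2 * l (\<rho> + z))"

end

theory Submission
  imports Defs
begin

text \<open>
  Write \<open>a = (1 + \<theta>)/2\<close>, \<open>b = (1 - \<theta>)/2\<close> and \<open>g s = inf\<^sub>z (a l(s - z) + b l(s + z))\<close>.
  Shifting \<open>s\<close> by \<open>\<delta> \<ge> 0\<close> and moving one of the two arguments back by \<open>\<delta>\<close>
  shows \<open>g (s + \<delta>) \<le> g s + \<delta> l'(s + 2\<delta>)\<close>: which of the two arguments to move is decided by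
  convexity of \<open>1/l'\<close>, which puts \<open>l'\<close> at the midpoint \<open>s + 2\<delta>\<close> above the harmonic mean
  of its values at the shifted arguments. Together with \<open>l (s + \<delta>) - l s \<ge> \<delta> l' s\<close> this gives
  \<open>\<psi>(s + \<delta>) - \<psi>(s) \<ge> \<delta> (l' s - l'(s + 2\<delta>))\<close>. Summing over a partition of \<open>[x, y]\<close>
  into \<open>n\<close> steps, the right-hand sides telescope to \<open>O(1/n)\<close>, so \<open>\<psi>\<close> is non-decreasing.
\<close>

lemma harmonic_mean_weighted_split:
  fixes A B C a b :: real
  assumes "0 < A" "0 < B" "0 < C" "0 \<le> a" "0 \<le> b" "a + b = 1"
    and "1 / C \<le> (1 / A + 1 / B) / 2"
  shows "2 * a * A \<le> C \<or> 2 * b * B \<le> C"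
proof (rule ccontr)
  assume "\<not> ?thesis"
  hence "C * B < 2 * a * A * B" "C * A < 2 * b * B * A"
    using assms(1,2) by auto
  moreover have "2 * A * B \<le> C * (A + B)"
    using assms(1,2,3,7) by (simp add: field_simps)
  ultimately have "2 * A * B < 2 * A * B * (a + b)"
    by (simp add: algebra_simps)
  thus False using assms(6) by simp
qed

lemma Sup_ereal_zeros_less:
  fixes f :: "real \<Rightarrow> real"
  assumes "mono f" "continuous_on UNIV f" "0 < f x"
  shows "Sup {ereal z | z. f z = 0} < ereal x"
proof -
  have "eventually (\<lambda>y. 0 < f y) (at x)"
    using assms(2,3) by (intro order_tendstoD(1)) (auto simp: continuous_on_eq_continuous_at isCont_def)
  then obtain e where e: "0 < e" "\<And>y. y \<noteq> x \<Longrightarrow> dist y x < e \<Longrightarrow> 0 < f y"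
    unfolding eventually_at by blast
  have "z \<le> x - e / 2" if "f z = 0" for z
  proof (rule ccontr)
    assume "\<not> z \<le> x - e / 2"
    moreover have "z < x"
      using monoD[OF assms(1), of x z] assms(3) that by force
    ultimately have "z \<noteq> x" "dist z x < e"
      using e(1) by (auto simp: dist_real_def)
    thus False using e(2) that by force
  qed
  hence "Sup {ereal z | z. f z = 0} \<le> ereal (x - e / 2)"
    by (auto intro!: Sup_least)
  also have "\<dots> < ereal x" using e(1) by simp
  finally show ?thesis .
qed

lemma mono_if_increment_ge:
  fixes p h :: "real \<Rightarrow> real"
  assumes "mono h"
    and increment: "\<And>s \<delta>. 0 \<le> \<delta> \<Longrightarrow> \<delta> * (h s - h (s + 2 * \<delta>)) \<le> p (s + \<delta>) - p s"
  shows "mono p"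
proof (rule monoI)
  fix x y :: real
  assume "x \<le> y"
  define K where "K = 2 * (y - x) * (h (2 * y - x) - h x)"
  have bound: "- K / real n \<le> p y - p x" if "1 \<le> n" for n
  proof -
    define \<delta> where "\<delta> = (y - x) / real n"
    define t where "t k = x + real k * \<delta>" for k :: nat
    have "0 \<le> \<delta>"
      using \<open>x \<le> y\<close> by (simp add: \<delta>_def)
    have "\<delta> \<le> (y - x) / 1"
      unfolding \<delta>_def using \<open>x \<le> y\<close> that by (intro divide_left_mono) auto
    hence "\<delta> \<le> y - x" by simp
    have telescope: "\<delta> * (h (t 0) + h (t 1) - h (t k) - h (t (Suc k))) \<le> p (t k) - p x" for k
    proof (induction k)
      case (Suc k)
      have "\<delta> * (h (t k) - h (t (Suc (Suc k)))) \<le> p (t (Suc k)) - p (t k)"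
        using increment[OF \<open>0 \<le> \<delta>\<close>, of "t k"] by (simp add: t_def algebra_simps)
      with Suc.IH show ?case by (simp add: algebra_simps)
    qed (simp add: t_def)
    have "t n = y" "t (Suc n) = y + \<delta>"
      using that by (simp_all add: t_def \<delta>_def field_simps)
    moreover have "h x \<le> h (t 1)" "h y \<le> h (2 * y - x)" "h (y + \<delta>) \<le> h (2 * y - x)"
      using \<open>0 \<le> \<delta>\<close> \<open>\<delta> \<le> y - x\<close> \<open>x \<le> y\<close> by (auto simp: t_def intro: monoD[OF assms(1)])
    ultimately have "2 * h x - 2 * h (2 * y - x) \<le> h (t 0) + h (t 1) - h (t n) - h (t (Suc n))"
      by (simp add: t_def)
    hence "\<delta> * (2 * h x - 2 * h (2 * y - x)) \<le> p y - p x"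
      using telescope[of n] \<open>t n = y\<close> mult_left_mono[OF _ \<open>0 \<le> \<delta>\<close>] by fastforce
    moreover have "- K / real n = \<delta> * (2 * h x - 2 * h (2 * y - x))"
      using that by (simp add: K_def \<delta>_def field_simps)
    ultimately show ?thesis by simp
  qed
  have "(\<lambda>n. - K / real n) \<longlonglongrightarrow> 0"
    using lim_const_over_n[of "- K"] by simp
  hence "0 \<le> p y - p x"
    using bound by (intro LIMSEQ_le_const2) auto
  thus "p x \<le> p y" by simp
qed

lemma convex_on_UNIV_deriv_mono:
  fixes l l' :: "real \<Rightarrow> real"
  assumes "convex_on UNIV l" "\<And>z. (l has_real_derivative l' z) (at z)"
  shows "mono l'"
proof (rule monoI)
  fix x y :: real
  assume "x \<le> y"
  have "l' x * (y - x) \<le> l' y * (y - x)"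
    using convex_on_imp_above_tangent[OF assms(1), of x y "l' x"]
      convex_on_imp_above_tangent[OF assms(1), of y x "l' y"] assms(2)
    by (simp add: algebra_simps)
  thus "l' x \<le> l' y"
    using \<open>x \<le> y\<close> by (cases "x = y") auto
qed

context
  fixes l l' :: "real \<Rightarrow> real"
  assumes convex: "convex_on UNIV l"
    and deriv: "\<And>z. (l has_real_derivative l' z) (at z)"
begin

lemma tangent_le: "l' x * (y - x) \<le> l y - l x"
  using convex_on_imp_above_tangent[OF convex, of x y "l' x"] deriv[of x] by simp

lemma harmonic_deriv_split:
  assumes deriv_nonneg: "\<And>z. 0 \<le> l' z"
    and inv_convex: "convex_on D (\<lambda>z. 1 / l' z)" and "\<And>z. 0 < l' z \<Longrightarrow> z \<in> D"
    and "0 \<le> a" "0 \<le> b" "a + b = 1"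
  shows "2 * a * l' U \<le> l' ((U + V) / 2) \<or> 2 * b * l' V \<le> l' ((U + V) / 2)"
proof (cases "0 < l' U \<and> 0 < l' V")
  case True
  have "1 / l' ((1 - 1 / 2) *\<^sub>R U + (1 / 2) *\<^sub>R V) \<le> (1 - 1 / 2) * (1 / l' U) + (1 / 2) * (1 / l' V)"
    using True assms(3) by (intro convex_onD[OF inv_convex]) auto
  hence "1 / l' ((U + V) / 2) \<le> (1 / l' U + 1 / l' V) / 2"
    by (simp add: field_simps)
  moreover have "l' (min U V) \<le> l' ((U + V) / 2)"
    by (intro monoD[OF convex_on_UNIV_deriv_mono[OF convex deriv]]) auto
  hence "0 < l' ((U + V) / 2)"
    using True by (simp add: min_def split: if_splits)
  ultimately show ?thesis
    using True assms(4-6) by (intro harmonic_mean_weighted_split) auto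
next
  case False
  thus ?thesis using deriv_nonneg[of U] deriv_nonneg[of V] deriv_nonneg[of "(U + V) / 2"] by auto
qed

lemma shifted_pair_le:
  assumes deriv_nonneg: "\<And>z. 0 \<le> l' z"
    and inv_convex: "convex_on D (\<lambda>z. 1 / l' z)" and "\<And>z. 0 < l' z \<Longrightarrow> z \<in> D"
    and "0 \<le> a" "0 \<le> b" "a + b = 1" "0 \<le> \<delta>"
  shows "\<exists>z'. a * l (s + \<delta> - z') + b * l (s + \<delta> + z')
    \<le> a * l (s - z) + b * l (s + z) + \<delta> * l' (s + 2 * \<delta>)"
proof -
  define U where "U = s - z + 2 * \<delta>"
  define V where "V = s + z + 2 * \<delta>"
  have mid: "(U + V) / 2 = s + 2 * \<delta>"
    by (simp add: U_def V_def field_simps)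
  consider "2 * a * l' U \<le> l' (s + 2 * \<delta>)" | "2 * b * l' V \<le> l' (s + 2 * \<delta>)"
    using harmonic_deriv_split[OF assms(1-6), of U V] mid by auto
  thus ?thesis
  proof cases
    case 1
    have "a * (l U - l (s - z)) \<le> a * (l' U * (2 * \<delta>))"
      using tangent_le[of U "s - z"] \<open>0 \<le> a\<close> by (intro mult_left_mono) (auto simp: U_def)
    also have "\<dots> \<le> l' (s + 2 * \<delta>) * \<delta>"
      using mult_right_mono[OF 1 \<open>0 \<le> \<delta>\<close>] by simp
    finally show ?thesis
      by (intro exI[of _ "z - \<delta>"]) (simp add: U_def algebra_simps)
  next
    case 2
    have "b * (l V - l (s + z)) \<le> b * (l' V * (2 * \<delta>))"
      using tangent_le[of V "s + z"] \<open>0 \<le> b\<close> by (intro mult_left_mono) (auto simp: V_def)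
    also have "\<dots> \<le> l' (s + 2 * \<delta>) * \<delta>"
      using mult_right_mono[OF 2 \<open>0 \<le> \<delta>\<close>] by simp
    finally show ?thesis
      by (intro exI[of _ "z + \<delta>"]) (simp add: V_def algebra_simps)
  qed
qed

lemma psi_increment_ge:
  assumes nonneg: "\<And>z. 0 \<le> l z" and deriv_nonneg: "\<And>z. 0 \<le> l' z"
    and inv_convex: "convex_on D (\<lambda>z. 1 / l' z)" and "\<And>z. 0 < l' z \<Longrightarrow> z \<in> D"
    and "\<theta> \<in> {0..1}" "0 \<le> \<delta>"
  shows "\<delta> * (l' s - l' (s + 2 * \<delta>)) \<le> psi l \<theta> (s + \<delta>) - psi l \<theta> s"
proof -
  define a b where "a = (1 + \<theta>) / 2" and "b = (1 - \<theta>) / 2"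
  have ab: "0 \<le> a" "0 \<le> b" "a + b = 1"
    using \<open>\<theta> \<in> {0..1}\<close> by (auto simp: a_def b_def field_simps)
  define g where "g s = (INF z. a * l (s - z) + b * l (s + z))" for s
  have g_le: "g s \<le> a * l (s - z) + b * l (s + z)" for s z
    unfolding g_def using ab nonneg by (intro cINF_lower bdd_belowI[of _ 0]) auto
  have "g (s + \<delta>) - \<delta> * l' (s + 2 * \<delta>) \<le> g s"
    unfolding g_def[of s]
  proof (rule cINF_greatest)
    fix z
    obtain z' where "a * l (s + \<delta> - z') + b * l (s + \<delta> + z')
        \<le> a * l (s - z) + b * l (s + z) + \<delta> * l' (s + 2 * \<delta>)"
      using shifted_pair_le[OF deriv_nonneg inv_convex assms(4) ab \<open>0 \<le> \<delta>\<close>] by blast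
    thus "g (s + \<delta>) - \<delta> * l' (s + 2 * \<delta>) \<le> a * l (s - z) + b * l (s + z)"
      using g_le[of "s + \<delta>" z'] by simp
  qed simp
  moreover have "psi l \<theta> t = l t - g t" for t
    by (simp add: psi_def g_def a_def b_def)
  ultimately show ?thesis
    using tangent_le[of s "s + \<delta>"] by (simp add: right_diff_distrib mult.commute[of "l' s"])
qed

end

theorem lemma6:
  fixes l l' l'' :: "real \<Rightarrow> real" and d :: ereal
  assumes mono: "mono l"
    and cvx: "convex_on UNIV l"
    and nonneg: "\<And>z. l z \<ge> 0"
    and deriv1: "\<And>z. (l has_real_derivative l' z) (at z)"
    and cont1: "continuous_on UNIV l'"
    and pos: "\<And>z. z \<ge> - l 0 / 2 \<Longrightarrow> l' z > 0"
    and d_def: "d = Sup {ereal z | z. l' z = 0}"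
    and d_lt: "d < ereal (- l 0 / 2)"
    and deriv2: "\<And>z. d < ereal z \<Longrightarrow> (l' has_real_derivative l'' z) (at z)"
    and cont2: "continuous_on {z. d < ereal z} l''"
    and pos2: "\<And>z. d < ereal z \<Longrightarrow> l'' z > 0"
    and inv_cvx: "convex_on {z. d < ereal z} (\<lambda>z. 1 / l' z)"
  shows "\<forall>\<theta>\<in>{0..1}. \<forall>a b. - l 0 / 2 \<le> a \<and> a \<le> b \<longrightarrow> psi l \<theta> a \<le> psi l \<theta> b"
proof (intro ballI allI impI)
  fix \<theta> a b :: real
  assume "\<theta> \<in> {0..1}" and "- l 0 / 2 \<le> a \<and> a \<le> b"
  have l'_mono: "mono l'"
    using cvx deriv1 by (rule convex_on_UNIV_deriv_mono)
  have l'_nonneg: "0 \<le> l' z" for z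
    using mono_on_imp_deriv_nonneg[of UNIV l "l' z" z] mono deriv1 by simp
  have right_of_d: "z \<in> {z. d < ereal z}" if "0 < l' z" for z
    unfolding d_def using Sup_ereal_zeros_less[OF l'_mono cont1 that] by simp
  have "mono (psi l \<theta>)"
  proof (rule mono_if_increment_ge[OF l'_mono])
    fix s \<delta> :: real
    assume "0 \<le> \<delta>"
    show "\<delta> * (l' s - l' (s + 2 * \<delta>)) \<le> psi l \<theta> (s + \<delta>) - psi l \<theta> s"
      by (rule psi_increment_ge[OF cvx deriv1 nonneg l'_nonneg inv_cvx right_of_d
            \<open>\<theta> \<in> {0..1}\<close> \<open>0 \<le> \<delta>\<close>])
  qed
  thus "psi l \<theta> a \<le> psi l \<theta> b"
    using \<open>- l 0 / 2 \<le> a \<and> a \<le> b\<close> by (auto dest: monoD)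
qed

end
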